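(* Let $A\in\mathbb{R}^{r\times n}$, $\mathcal{X}\subseteq\mathbb{R}^n$, and let $f:\mathcal{D}\to\mathbb{R}$ be upper semicontinuous and quasi-convex, where $\mathcal{D}\subseteq\mathbb{R}^r$ is open and convex, and the set $A\mathcal{X}=\{Ax: x\in\mathcal{X}\}$ is compact with $A\mathcal{X}\subseteq\mathcal{D}$. Then there exists $c\in\mathbb{R}^r$ such that every optimal solution of $\max_{x\in\mathcal{X}}c^\top Ax$ is also an optimal solution of $\max\{f(Ax): x\in\mathcal{X}\}$.
   Context: A function $g:\mathcal{D}\to\mathbb{R}$ on a convex open set $\mathcal{D}$ is quasi-convex if $\{x\in\mathcal{D}: g(x)\le t\}$ is convex for every $t\in\mathbb{R}$. *)

theory Defs
  imports "HOL-Analysis.Analysis"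
begin

definition quasi_convex_on :: "'a::real_vector set \<Rightarrow> ('a \<Rightarrow> real) \<Rightarrow> bool" where
  "quasi_convex_on D g \<longleftrightarrow> (\<forall>t::real. convex {x\<in>D. g x \<le> t})"

definition upper_semicontinuous_on :: "'a::metric_space set \<Rightarrow> ('a \<Rightarrow> real) \<Rightarrow> bool" where
  "upper_semicontinuous_on D g \<longleftrightarrow>
     (\<forall>x\<in>D. \<forall>t. g x < t \<longrightarrow> (\<exists>e>0. \<forall>y\<in>D. dist y x < e \<longrightarrow> g y < t))"

end

theory Submission
  imports Defs
begin

text \<open>Let \<open>z\<^sub>0\<close> maximize \<open>f\<close> over the compact set \<open>K = A X\<close>; upper semicontinuity
  makes this maximum exist and makes the strict sublevel set \<open>U = {z \<in> D. f z < f z\<^sub>0}\<close> open,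
  while quasi-convexity makes \<open>U\<close> convex. A hyperplane through \<open>z\<^sub>0\<close> separates \<open>z\<^sub>0\<close> from
  the open convex set \<open>U\<close>, so \<open>c \<bullet> u < c \<bullet> z\<^sub>0\<close> on \<open>U\<close> for its normal \<open>c\<close>. A maximizer
  \<open>z\<close> of \<open>c \<bullet> z\<close> over \<open>K\<close> has \<open>c \<bullet> z \<ge> c \<bullet> z\<^sub>0\<close>, hence lies outside \<open>U\<close>, i.e.
  \<open>f z \<ge> f z\<^sub>0\<close>.\<close>

lemma upper_semicontinuous_on_openin_strict_sublevel:
  assumes "upper_semicontinuous_on D g"
  shows "openin (top_of_set D) {x\<in>D. g x < t}"
  using assms unfolding upper_semicontinuous_on_def openin_euclidean_subtopology_iff by blast

lemma upper_semicontinuous_on_attains_max: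
  fixes g :: "'a::metric_space \<Rightarrow> real"
  assumes usc: "upper_semicontinuous_on D g"
    and K: "compact K" "K \<subseteq> D" "K \<noteq> {}"
  shows "\<exists>z\<in>K. \<forall>y\<in>K. g y \<le> g z"
proof (rule ccontr)
  assume "\<not> ?thesis"
  then have no_max: "\<forall>z\<in>K. \<exists>w\<in>K. g z < g w"
    by (meson not_le)
  have "\<forall>w. \<exists>T. open T \<and> {x\<in>D. g x < g w} = D \<inter> T"
    using upper_semicontinuous_on_openin_strict_sublevel[OF usc] by (simp add: openin_open)
  then obtain T where T_open: "\<And>w. open (T w)"
    and T_sublevel: "\<And>w. {x\<in>D. g x < g w} = D \<inter> T w"
    by metis
  have T_iff: "z \<in> T w \<longleftrightarrow> g z < g w" if "z \<in> K" for z w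
    using T_sublevel[of w] that K(2) by blast
  have cover: "K \<subseteq> (\<Union>w\<in>K. T w)"
    using no_max T_iff by blast
  obtain F where F: "F \<subseteq> K" "finite F" "K \<subseteq> (\<Union>w\<in>F. T w)"
    using compactE_image[OF K(1) T_open cover] by blast
  then have "F \<noteq> {}"
    using K(3) by auto
  then obtain w where w: "w \<in> F" "Max (g ` F) = g w"
    using obtains_MAX[OF F(2)] by metis
  then obtain v where "v \<in> F" "w \<in> T v"
    using F by blast
  then have "g w < g v"
    using T_iff F(1) w(1) by blast
  moreover have "g v \<le> g w"
    using w F(2) \<open>v \<in> F\<close> by (metis Max_ge finite_imageI imageI)
  ultimately show False
    by simp
qed

lemma quasi_convex_on_convex_strict_sublevel:
  assumes "quasi_convex_on D g"
  shows "convex {x\<in>D. g x < t}"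
proof (rule convexI)
  fix u v and a b :: real
  assume u: "u \<in> {x\<in>D. g x < t}" and v: "v \<in> {x\<in>D. g x < t}"
    and ab: "0 \<le> a" "0 \<le> b" "a + b = 1"
  let ?s = "max (g u) (g v)"
  have "convex {x\<in>D. g x \<le> ?s}"
    using assms unfolding quasi_convex_on_def by blast
  moreover have "u \<in> {x\<in>D. g x \<le> ?s}" "v \<in> {x\<in>D. g x \<le> ?s}"
    using u v by auto
  ultimately have "a *\<^sub>R u + b *\<^sub>R v \<in> {x\<in>D. g x \<le> ?s}"
    using ab by (simp add: convex_def)
  then show "a *\<^sub>R u + b *\<^sub>R v \<in> {x\<in>D. g x < t}"
    using u v by auto
qed

lemma separating_hyperplane_open_point:
  fixes U :: "'a::euclidean_space set"
  assumes "convex U" "open U" "z \<notin> U"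
  obtains c where "\<And>u. u \<in> U \<Longrightarrow> c \<bullet> u < c \<bullet> z"
proof -
  have "convex ((\<lambda>u. z + (-1) *\<^sub>R u) ` U)"
    using convex_affinity[OF assms(1)] .
  moreover have "0 \<notin> (\<lambda>u. z + (-1) *\<^sub>R u) ` U"
    using assms(3) by auto
  ultimately obtain c where "c \<noteq> 0" "\<forall>x\<in>(\<lambda>u. z + (-1) *\<^sub>R u) ` U. 0 \<le> c \<bullet> x"
    by (blast dest: separating_hyperplane_set_0)
  then have "U \<subseteq> {x. c \<bullet> x \<le> c \<bullet> z}"
    by (force simp: inner_diff_right)
  then have "U \<subseteq> interior {x. c \<bullet> x \<le> c \<bullet> z}"
    using assms(2) by (simp add: interior_maximal)
  then show ?thesis
    using that \<open>c \<noteq> 0\<close> by auto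
qed

lemma quasi_convex_on_max_at_linear_maximizers:
  fixes f :: "'a::euclidean_space \<Rightarrow> real"
  assumes "open D" "upper_semicontinuous_on D f" "quasi_convex_on D f"
    and "compact K" "K \<subseteq> D"
  shows "\<exists>c. \<forall>z\<in>K. (\<forall>w\<in>K. c \<bullet> w \<le> c \<bullet> z) \<longrightarrow> (\<forall>y\<in>K. f y \<le> f z)"
proof (cases "K = {}")
  case True
  then show ?thesis
    by blast
next
  case False
  obtain z0 where z0: "z0 \<in> K" "\<And>y. y \<in> K \<Longrightarrow> f y \<le> f z0"
    using upper_semicontinuous_on_attains_max[OF assms(2,4,5) False] by auto
  let ?U = "{x\<in>D. f x < f z0}"
  have "convex ?U"
    using assms(3) by (rule quasi_convex_on_convex_strict_sublevel)
  moreover have "open ?U"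
    using upper_semicontinuous_on_openin_strict_sublevel[OF assms(2)] assms(1)
    by (rule openin_open_trans)
  moreover have "z0 \<notin> ?U"
    by simp
  ultimately obtain c where c: "\<And>u. u \<in> ?U \<Longrightarrow> c \<bullet> u < c \<bullet> z0"
    by (rule separating_hyperplane_open_point) blast
  have "f y \<le> f z" if "z \<in> K" "\<forall>w\<in>K. c \<bullet> w \<le> c \<bullet> z" "y \<in> K" for z y
  proof -
    have "z \<notin> ?U"
      using c[of z] that(2) z0(1) by fastforce
    then have "f z0 \<le> f z"
      using that(1) assms(5) by auto
    then show ?thesis
      using z0(2)[OF that(3)] by linarith
  qed
  then show ?thesis
    by blast
qed

theorem proposition8:
  fixes A :: "real^'n^'r"
    and X :: "(real^'n) set"
    and D :: "(real^'r) set"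
    and f :: "real^'r \<Rightarrow> real"
  assumes "open D" and "convex D"
    and "upper_semicontinuous_on D f"
    and "quasi_convex_on D f"
    and "compact ((\<lambda>x. A *v x) ` X)"
    and "(\<lambda>x. A *v x) ` X \<subseteq> D"
  shows "\<exists>c :: real^'r. \<forall>x\<in>X.
           (\<forall>y\<in>X. c \<bullet> (A *v y) \<le> c \<bullet> (A *v x)) \<longrightarrow>
           (\<forall>y\<in>X. f (A *v y) \<le> f (A *v x))"
  using quasi_convex_on_max_at_linear_maximizers[OF assms(1,3,4,5,6)] by simp

end
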